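(* Consider the ODE system $$\frac{du}{dt}=\frac{a_1u}{1+fv}-b_1u^2-c_1uv,\qquad \frac{dv}{dt}=a_2v-b_2v^2-c_2uv,$$ with positive parameters $a_1,a_2,b_1,b_2,c_1,c_2$, and regard $f$ as the bifurcation parameter. Let $E_3=(0,v^* )$ with $v^*=\frac{a_2}{b_2}$, and let $$f^*=\frac{b_2(a_1b_2-a_2c_1)}{a_2^2c_1}.$$ If $$\frac{a_1f^*}{(1+f^*v^* )^2}+c_1-\frac{b_1b_2}{c_2}\neq0,$$ then the system undergoes a transcritical bifurcation around $E_3$ at $f=f^*$. *)

theory Defs
  imports "HOL-Analysis.Analysis"
begin

text \<open>Transcritical bifurcation of a planar parametrised vector field
  x' = F mu x  (x in R^2 represented as real * real, mu in R) at the equilibrium x0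
  for the parameter value mu0, in the sense of Sotomayor's theorem (Perko,
  Differential Equations and Dynamical Systems, Thm. 3.1.1 (ii)), which is the
  criterion used in the paper:
  the map (x,mu) |-> F mu x is C^2 near (x0,mu0); F mu0 x0 = 0;
  A = D_x F(x0,mu0) has a simple eigenvalue 0 (det A = 0) and its other
  eigenvalue is nonzero (trace A ~= 0); V spans ker A, W spans ker A^T;
  W . F_mu = 0, W . (D F_mu V) ~= 0, W . D^2F(V,V) ~= 0.\<close>

definition transcritical_bifurcation ::
  "(real \<Rightarrow> real \<times> real \<Rightarrow> real \<times> real) \<Rightarrow> real \<times> real \<Rightarrow> real \<Rightarrow> bool" where
  "transcritical_bifurcation F x0 \<mu>0 \<longleftrightarrow>
    (\<exists>S DP D2P V W.
       open S \<and> (x0, \<mu>0) \<in> S \<and>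
       (\<forall>z\<in>S. ((\<lambda>(x, \<mu>). F \<mu> x) has_derivative blinfun_apply (DP z)) (at z)) \<and>
       (\<forall>z\<in>S. (DP has_derivative blinfun_apply (D2P z)) (at z)) \<and>
       continuous_on S D2P \<and>
       (let z0 = (x0, \<mu>0);
            A = (\<lambda>v. DP z0 (v, 0));
            a11 = fst (A (1, 0)); a21 = snd (A (1, 0));
            a12 = fst (A (0, 1)); a22 = snd (A (0, 1));
            F\<mu> = DP z0 ((0, 0), 1);
            DF\<mu>V = D2P z0 ((0, 0), 1) (V, 0);
            D2FVV = D2P z0 (V, 0) (V, 0)
        in F \<mu>0 x0 = (0, 0) \<and>
           a11 * a22 - a12 * a21 = 0 \<and> a11 + a22 \<noteq> 0 \<and>
           V \<noteq> (0, 0) \<and> A V = (0, 0) \<and>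
           W \<noteq> (0, 0) \<and> (\<forall>v. inner W (A v) = 0) \<and>
           inner W F\<mu> = 0 \<and> inner W DF\<mu>V \<noteq> 0 \<and> inner W D2FVV \<noteq> 0))"

end

theory Submission
  imports Defs
begin

(* The parameter value f_star is exactly the one for which the u-nullcline
   a1 / (1 + f v) = b1 u + c1 v passes through E3 = (0, v_star).  There the Jacobian is
   [[0, 0], [-c2 v_star, -a2]]: a simple eigenvalue 0 with kernel spanned by V = (b2, -c2) and
   left kernel spanned by W = (1, 0), the other eigenvalue being -a2.  The axis u = 0 is
   invariant for every f, so W . F_f = 0 at E3, while
   W . D F_f V = -a1 b2 v_star / (1 + f_star v_star)^2 and
   W . D^2 F (V, V) = 2 b2 c2 (a1 f_star / (1 + f_star v_star)^2 + c1 - b1 b2 / c2)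
   are nonzero; these are Sotomayor's conditions for a transcritical bifurcation. *)

lemma linear_euclidean_expansion:
  fixes g :: "'a::euclidean_space \<Rightarrow> 'b::real_vector"
  assumes "linear g"
  shows "g x = (\<Sum>j\<in>Basis. (x \<bullet> j) *\<^sub>R g j)"
proof -
  have "g x = g (\<Sum>j\<in>Basis. (x \<bullet> j) *\<^sub>R j)"
    by (simp add: euclidean_representation)
  then show ?thesis
    by (simp add: linear_sum[OF assms] linear_scale[OF assms])
qed

lemma linear_derivative_of_linear_family:
  assumes "open S" "z \<in> S"
    and lin: "\<And>w. w \<in> S \<Longrightarrow> linear (f' w)"
    and deriv: "\<And>h. ((\<lambda>w. f' w h) has_derivative f'' h) (at z)"
  shows "linear (\<lambda>h. f'' h k)"
proof (rule linearI)
  fix x y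
  have "((\<lambda>w. f' w (x + y)) has_derivative (\<lambda>k. f'' x k + f'' y k)) (at z)"
    by (rule has_derivative_transform_within_open[OF has_derivative_add[OF deriv deriv] assms(1,2)])
      (simp add: linear_add[OF lin])
  then show "f'' (x + y) k = f'' x k + f'' y k"
    using has_derivative_unique[OF deriv] by metis
next
  fix r x
  have "((\<lambda>w. f' w (r *\<^sub>R x)) has_derivative (\<lambda>k. r *\<^sub>R f'' x k)) (at z)"
    by (rule has_derivative_transform_within_open[OF has_derivative_scaleR_right[OF deriv] assms(1,2)])
      (simp add: linear_scale[OF lin])
  then show "f'' (r *\<^sub>R x) k = r *\<^sub>R f'' x k"
    using has_derivative_unique[OF deriv] by metis
qed

lemma twice_differentiable_blinfunE:
  fixes f :: "'a::euclidean_space \<Rightarrow> 'b::real_normed_vector"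
  assumes S: "open S"
    and f': "\<And>z. z \<in> S \<Longrightarrow> (f has_derivative f' z) (at z)"
    and f'': "\<And>z h. z \<in> S \<Longrightarrow> ((\<lambda>w. f' w h) has_derivative f'' z h) (at z)"
    and cont: "\<And>h k. continuous_on S (\<lambda>z. f'' z h k)"
  obtains DP D2P where
    "\<And>z. z \<in> S \<Longrightarrow> (f has_derivative blinfun_apply (DP z)) (at z)"
    "\<And>z. z \<in> S \<Longrightarrow> (DP has_derivative blinfun_apply (D2P z)) (at z)"
    "continuous_on S D2P"
    "\<And>z h. z \<in> S \<Longrightarrow> DP z h = f' z h"
    "\<And>z k h. z \<in> S \<Longrightarrow> D2P z k h = f'' z h k"
proof -
  \<comment> \<open>Writing f' w in coordinates makes its derivative computable termwise.\<close>
  define DP where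
    "DP w = (\<Sum>j\<in>Basis. blinfun_scaleR_left (f' w j) o\<^sub>L blinfun_inner_left j)" for w
  define D2 where
    "D2 z k = (\<Sum>j\<in>Basis. blinfun_scaleR_left (f'' z j k) o\<^sub>L blinfun_inner_left j)" for z k
  have lin': "linear (f' z)" if "z \<in> S" for z
    using has_derivative_linear[OF f'[OF that]] .
  have lin'': "linear (\<lambda>h. f'' z h k)" if "z \<in> S" for z k
    using linear_derivative_of_linear_family[OF S that lin' f''[OF that]] .
  have DP_apply: "blinfun_apply (DP z) = f' z" if "z \<in> S" for z
    using linear_euclidean_expansion[OF lin'[OF that], symmetric]
    by (simp add: DP_def blinfun.sum_left fun_eq_iff)
  have D2_apply: "D2 z k h = f'' z h k" if "z \<in> S" for z k h
    using linear_euclidean_expansion[OF lin''[OF that], of h, symmetric]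
    by (simp add: D2_def blinfun.sum_left)
  have DP_deriv: "(DP has_derivative D2 z) (at z)" if "z \<in> S" for z
    unfolding DP_def[abs_def] D2_def
    by (rule has_derivative_eq_rhs, (rule derivative_eq_intros refl f''[OF that])+) simp
  define D2P where "D2P z = Blinfun (D2 z)" for z
  have D2P_apply: "blinfun_apply (D2P z) = D2 z" if "z \<in> S" for z
    unfolding D2P_def
    using bounded_linear_Blinfun_apply[OF has_derivative_bounded_linear[OF DP_deriv[OF that]]] .
  have D2P_cont: "continuous_on S D2P"
  proof (rule continuous_on_blinfun_componentwise)
    fix i :: 'a
    have "continuous_on S (\<lambda>z. D2 z i)"
      unfolding D2_def by (intro continuous_intros cont)
    then show "continuous_on S (\<lambda>z. D2P z i)"
      by (rule continuous_on_cong[THEN iffD1, rotated 2]) (simp_all add: D2P_apply)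
  qed
  show thesis
    by (rule that[of DP D2P]) (simp_all add: f' DP_deriv DP_apply D2P_apply D2_apply D2P_cont)
qed

lemma transcritical_bifurcationI:
  fixes F :: "real \<Rightarrow> real \<times> real \<Rightarrow> real \<times> real"
  assumes "open S" "(x0, \<mu>0) \<in> S"
    and "\<And>z. z \<in> S \<Longrightarrow> ((\<lambda>(x, \<mu>). F \<mu> x) has_derivative F' z) (at z)"
    and "\<And>z h. z \<in> S \<Longrightarrow> ((\<lambda>z. F' z h) has_derivative F'' z h) (at z)"
    and "\<And>h k. continuous_on S (\<lambda>z. F'' z h k)"
  defines "A \<equiv> \<lambda>v. F' (x0, \<mu>0) (v, 0)"
  assumes "F \<mu>0 x0 = (0, 0)"
    and "fst (A (1, 0)) * snd (A (0, 1)) - fst (A (0, 1)) * snd (A (1, 0)) = 0"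
    and "fst (A (1, 0)) + snd (A (0, 1)) \<noteq> 0"
    and "V \<noteq> (0, 0)" "A V = (0, 0)"
    and "W \<noteq> (0, 0)" "\<And>v. inner W (A v) = 0"
    and "inner W (F' (x0, \<mu>0) ((0, 0), 1)) = 0"
    and "inner W (F'' (x0, \<mu>0) (V, 0) ((0, 0), 1)) \<noteq> 0"
    and "inner W (F'' (x0, \<mu>0) (V, 0) (V, 0)) \<noteq> 0"
  shows "transcritical_bifurcation F x0 \<mu>0"
proof -
  obtain DP D2P where
    "\<And>z. z \<in> S \<Longrightarrow> ((\<lambda>(x, \<mu>). F \<mu> x) has_derivative blinfun_apply (DP z)) (at z)"
    "\<And>z. z \<in> S \<Longrightarrow> (DP has_derivative blinfun_apply (D2P z)) (at z)"
    "continuous_on S D2P"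
    "\<And>h. DP (x0, \<mu>0) h = F' (x0, \<mu>0) h"
    "\<And>k h. D2P (x0, \<mu>0) k h = F'' (x0, \<mu>0) h k"
    using twice_differentiable_blinfunE[OF assms(1,3,4,5)] assms(2) by metis
  then show ?thesis
    unfolding transcritical_bifurcation_def Let_def
    using assms(1,2,7-)
    by (intro exI[of _ S] exI[of _ DP] exI[of _ D2P] exI[of _ V] exI[of _ W]) (simp add: A_def)
qed

locale competition_model =
  fixes a1 a2 b1 b2 c1 c2 :: real
begin

definition field :: "(real \<times> real) \<times> real \<Rightarrow> real \<times> real" where
  "field = (\<lambda>((u, v), f).
     (a1 * u / (1 + f * v) - b1 * u^2 - c1 * u * v, a2 * v - b2 * v^2 - c2 * u * v))"

definition field_deriv :: "(real \<times> real) \<times> real \<Rightarrow> (real \<times> real) \<times> real \<Rightarrow> real \<times> real" where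
  "field_deriv = (\<lambda>((u, v), f) ((hu, hv), hf).
     (a1 * hu / (1 + f * v) - a1 * u * (f * hv + v * hf) / (1 + f * v)^2
        - 2 * b1 * u * hu - c1 * (u * hv + v * hu),
      a2 * hv - 2 * b2 * v * hv - c2 * (u * hv + v * hu)))"

definition field_deriv2 ::
    "(real \<times> real) \<times> real \<Rightarrow> (real \<times> real) \<times> real \<Rightarrow> (real \<times> real) \<times> real \<Rightarrow> real \<times> real" where
  "field_deriv2 = (\<lambda>((u, v), f) ((hu, hv), hf) ((ku, kv), kf).
     (- a1 * (hu * (f * kv + v * kf) + ku * (f * hv + v * hf) + u * (hv * kf + hf * kv))
          / (1 + f * v)^2
        + 2 * a1 * u * (f * hv + v * hf) * (f * kv + v * kf) / (1 + f * v)^3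
        - 2 * b1 * hu * ku - c1 * (hu * kv + ku * hv),
      - 2 * b2 * hv * kv - c2 * (hu * kv + ku * hv)))"

definition field_domain :: "((real \<times> real) \<times> real) set" where
  "field_domain = {((u, v), f). 1 + f * v \<noteq> 0}"

lemma open_field_domain: "open field_domain"
  unfolding field_domain_def case_prod_unfold
  by (intro open_Collect_neq continuous_intros)

lemma has_derivative_field:
  assumes "z \<in> field_domain"
  shows "(field has_derivative field_deriv z) (at z)"
proof -
  have D: "1 + snd z * snd (fst z) \<noteq> 0"
    using assms by (auto simp: field_domain_def)
  show ?thesis
    unfolding field_def case_prod_unfold
    apply (rule has_derivative_eq_rhs)
     apply (rule derivative_eq_intros refl | simp add: D)+
    using D by (simp add: field_deriv_def case_prod_unfold fun_eq_iff field_simps power2_eq_square)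
qed

lemma has_derivative_field_deriv:
  assumes "z \<in> field_domain"
  shows "((\<lambda>z. field_deriv z h) has_derivative field_deriv2 z h) (at z)"
proof -
  have D: "1 + snd z * snd (fst z) \<noteq> 0"
    using assms by (auto simp: field_domain_def)
  show ?thesis
    unfolding field_deriv_def case_prod_unfold
    apply (rule has_derivative_eq_rhs)
     apply (rule derivative_eq_intros refl | simp add: D)+
    using D apply (simp add: field_deriv2_def case_prod_unfold fun_eq_iff)
    apply (intro allI conjI; simp add: divide_simps; algebra)
    done
qed

lemma continuous_on_field_deriv2: "continuous_on field_domain (\<lambda>z. field_deriv2 z h k)"
  unfolding field_deriv2_def field_domain_def case_prod_unfold
  by (intro continuous_intros) auto

end

locale positive_competition_model = competition_model +
  assumes positive: "a1 > 0" "a2 > 0" "b1 > 0" "b2 > 0" "c1 > 0" "c2 > 0"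
begin

definition v_star :: real where
  "v_star = a2 / b2"

definition f_star :: real where
  "f_star = b2 * (a1 * b2 - a2 * c1) / (a2^2 * c1)"

lemma b2_v_star: "b2 * v_star = a2"
  using positive by (simp add: v_star_def)

lemma v_star_pos: "v_star > 0"
  using positive by (simp add: v_star_def)

lemma one_plus_f_star_v_star: "1 + f_star * v_star = a1 * b2 / (a2 * c1)"
  using positive by (simp add: f_star_def v_star_def field_simps power2_eq_square)

lemma one_plus_f_star_v_star_pos: "1 + f_star * v_star > 0"
  using positive by (simp add: one_plus_f_star_v_star)

lemma E3_in_field_domain: "((0, v_star), f_star) \<in> field_domain"
  using one_plus_f_star_v_star_pos by (simp add: field_domain_def)

lemma field_E3: "field ((0, v_star), f_star) = (0, 0)"
  using b2_v_star by (simp add: field_def power2_eq_square algebra_simps)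

lemma u_nullcline_through_E3: "a1 / (1 + f_star * v_star) = c1 * v_star"
  unfolding one_plus_f_star_v_star using positive by (simp add: v_star_def field_simps)

lemma field_deriv_E3:
  "field_deriv ((0, v_star), f_star) k = (0, - c2 * v_star * fst (fst k) - a2 * snd (fst k))"
proof -
  have "a1 * fst (fst k) / (1 + f_star * v_star) = c1 * v_star * fst (fst k)"
    using u_nullcline_through_E3 by (metis mult.commute times_divide_eq_left)
  then show ?thesis
    using b2_v_star by (simp add: field_deriv_def case_prod_unfold algebra_simps)
qed

lemma field_deriv_E3_kernel: "field_deriv ((0, v_star), f_star) ((b2, - c2), 0) = (0, 0)"
  using b2_v_star by (simp add: field_deriv_E3 algebra_simps)

lemma field_deriv2_E3_mixed:
  "fst (field_deriv2 ((0, v_star), f_star) ((b2, - c2), 0) ((0, 0), 1))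
    = - a1 * b2 * v_star / (1 + f_star * v_star)^2"
  by (simp add: field_deriv2_def)

lemma field_deriv2_E3_quadratic:
  "fst (field_deriv2 ((0, v_star), f_star) ((b2, - c2), 0) ((b2, - c2), 0))
    = 2 * b2 * c2 * (a1 * f_star / (1 + f_star * v_star)^2 + c1 - b1 * b2 / c2)"
  using positive by (simp add: field_deriv2_def field_simps power2_eq_square)

end

theorem mainTheorem12:
  fixes a1 a2 b1 b2 c1 c2 :: real
  assumes "a1 > 0" "a2 > 0" "b1 > 0" "b2 > 0" "c1 > 0" "c2 > 0"
  defines "vstar \<equiv> a2 / b2"
      and "fstar \<equiv> b2 * (a1 * b2 - a2 * c1) / (a2^2 * c1)"
  assumes "a1 * fstar / (1 + fstar * vstar)^2 + c1 - b1 * b2 / c2 \<noteq> 0"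
  shows "transcritical_bifurcation
           (\<lambda>f (u, v). (a1 * u / (1 + f * v) - b1 * u^2 - c1 * u * v,
                         a2 * v - b2 * v^2 - c2 * u * v))
           (0, vstar) fstar"
    (is "transcritical_bifurcation ?F _ _")
proof -
  interpret positive_competition_model a1 a2 b1 b2 c1 c2
    using assms(1-6) by unfold_locales
  have star_eqs: "vstar = v_star" "fstar = f_star"
    by (simp_all add: vstar_def v_star_def fstar_def f_star_def)
  have field_eq: "(\<lambda>(x, \<mu>). ?F \<mu> x) = field"
    by (auto simp: field_def)
  show ?thesis
  proof (rule transcritical_bifurcationI[where S = field_domain and F' = field_deriv
        and F'' = field_deriv2 and V = "(b2, - c2)" and W = "(1, 0)"])
    show "((\<lambda>(x, \<mu>). ?F \<mu> x) has_derivative field_deriv z) (at z)" if "z \<in> field_domain" for z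
      using has_derivative_field[OF that] by (simp add: field_eq)
    show "?F fstar (0, vstar) = (0, 0)"
      using field_E3 by (simp add: star_eqs field_def)
    show "field_deriv ((0, vstar), fstar) ((b2, - c2), 0) = (0, 0)"
      using field_deriv_E3_kernel by (simp add: star_eqs)
    show "(1, 0) \<bullet> field_deriv2 ((0, vstar), fstar) ((b2, - c2), 0) ((b2, - c2), 0) \<noteq> 0"
      using assms(4,6,9) by (simp add: star_eqs inner_prod_def field_deriv2_E3_quadratic)
  qed (use positive v_star_pos one_plus_f_star_v_star_pos in \<open>simp_all add: star_eqs inner_prod_def
      open_field_domain E3_in_field_domain has_derivative_field_deriv continuous_on_field_deriv2
      field_deriv_E3 field_deriv2_E3_mixed\<close>)
qed

end
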